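(* Let $d\geq 1$, let $f\in L^{\infty }(T^{d})$ with $\Vert f\Vert _{L^{\infty }(T^{d})}\leq 1$, and let $\nu \in \mathbb{Z}^{d}$. Let $E=\{x\in T^{d}:|f(x)|=1\}$ and for $n,k\in \mathbb{Z}$ put \[ b_{n,n-k}=\int_{E}f(x)^{n}e^{-2\pi i(n-k)\nu \cdot x}\,dx . \] Suppose that $\hat{f}(\xi )=0$ for all $\xi $ in a half-space $S$ of lattice points, that $\nu \in -S$, and that $\hat{f}(0)\neq 0$, and put $C=\log \frac{16}{|\hat{f}(0)|^{4}}$. Then for all integers $M\geq 1$, $p\geq 1$ and all $k\in \mathbb{Z}$, \[ \frac{1}{p+1}\sum_{m=M}^{M+p}|b_{m,m-k}|^{2}\leq \frac{C}{\log (p+1)}. \]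
   Context: $T^{d}=\mathbb{R}^{d}/\mathbb{Z}^{d}$ is the $d$-dimensional torus with normalized Lebesgue measure $dx$, and $\hat{f}(\xi )=\int_{T^{d}}f(x)e^{-2\pi i\xi \cdot x}dx$ for $\xi \in \mathbb{Z}^{d}$. A set $S\subset \mathbb{Z}^{d}$ is a half-space of lattice points if (i) $0\notin S$; (ii) for every $\xi \neq 0$ in $\mathbb{Z}^d$, $\xi \in S$ or $-\xi \in S$; (iii) $\xi ,\xi ^{\prime }\in S$ implies $\xi +\xi ^{\prime }\in S$. Here $-S=\{-\xi :\xi \in S\}$. *)

theory Defs
  imports "HOL-Analysis.Analysis"
begin

text \<open>The torus T^d is modelled by the unit cube [0,1]^d (fundamental domain),
  with Lebesgue measure restricted to it (total mass 1). Lattice points are int^'d.\<close>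

definition torus :: "(real^'d) set" where
  "torus = cbox 0 One"

definition torus_measure :: "(real^'d) measure" where
  "torus_measure = lebesgue_on torus"

definition lat_dot :: "int^'d \<Rightarrow> real^'d \<Rightarrow> real" where
  "lat_dot \<xi> x = (\<Sum>i\<in>UNIV. real_of_int (\<xi> $ i) * x $ i)"

definition fourier_coeff :: "(real^'d \<Rightarrow> complex) \<Rightarrow> int^'d \<Rightarrow> complex" where
  "fourier_coeff f \<xi> =
     (LINT x|torus_measure. f x * exp (- 2 * pi * \<i> * complex_of_real (lat_dot \<xi> x)))"

definition half_space :: "(int^'d) set \<Rightarrow> bool" where
  "half_space S \<longleftrightarrow> 0 \<notin> S \<and> (\<forall>\<xi>. \<xi> \<noteq> 0 \<longrightarrow> \<xi> \<in> S \<or> - \<xi> \<in> S)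
     \<and> (\<forall>\<xi>\<in>S. \<forall>\<xi>'\<in>S. \<xi> + \<xi>' \<in> S)"

definition unimod_set :: "(real^'d \<Rightarrow> complex) \<Rightarrow> (real^'d) set" where
  "unimod_set f = {x \<in> torus. cmod (f x) = 1}"

definition bcoef :: "(real^'d \<Rightarrow> complex) \<Rightarrow> int^'d \<Rightarrow> int \<Rightarrow> int \<Rightarrow> complex" where
  "bcoef f \<nu> n j =
     (LINT x|torus_measure. indicator (unimod_set f) x *
        ((f x) powi n * exp (- 2 * pi * \<i> * of_int j * complex_of_real (lat_dot \<nu> x))))"

end

theory Submission
  imports Defs
begin

(* Let E = {|f| = 1}, h = f e_(-nu) and N = p + 1, so that b_(m,m-k) is the integral of
   h^m e_(k nu) over E. By duality, sum |b_m|^2 is at most the supremum over x in E of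
   |sum conj(b_m) h(x)^m|, and expanding b_m turns this sum into an integral over y in E of a
   geometric sum in conj(h(x)) h(y). That geometric sum is at most sqrt N except where
   |h(y) - h(x)| < 2 / sqrt N, which is a sublevel set {|g| < 2 / sqrt N} of g = f - h(x) e_nu.
   Since nu lies in -S, g still has vanishing Fourier coefficients on S and g^(0) = f^(0). For
   such g the Jensen-type inequality log |g^(0)| <= integral of log |g| holds: for trigonometric
   polynomials u with spectrum outside S the integral of g exp(u) is g^(0) exp(integral of u),
   and indicators of sets can be approximated by real parts of such u. Hence the sublevel set has
   measure at most 2 log(2 / |f^(0)|) / log N, and
   sum |b_m|^2 <= sqrt N + 2 N log(2 / |f^(0)|) / log N <= N log(16 / |f^(0)|^4) / log N. *)

section \<open>The torus as a probability space\<close>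

lemma sets_lebesgue_torus [simp]: "torus \<in> sets lebesgue"
  unfolding torus_def by simp

lemma emeasure_torus: "emeasure lebesgue (torus :: (real^'d) set) = 1"
proof -
  have "emeasure lborel (cbox (0::real^'d) One) = (\<Prod>b\<in>Basis. (One - (0::real^'d)) \<bullet> b)"
    by (rule emeasure_lborel_cbox) (auto simp: inner_Basis)
  then show ?thesis
    by (simp add: torus_def inner_Basis)
qed

lemma space_torus_measure [simp]: "space torus_measure = torus"
  by (simp add: torus_measure_def)

lemma sets_torus_measure_iff: "A \<in> sets torus_measure \<longleftrightarrow> A \<in> sets lebesgue \<and> A \<subseteq> torus"
  by (auto simp: torus_measure_def sets_restrict_space_iff)

lemma measure_torus_measure:
  "A \<in> sets lebesgue \<Longrightarrow> A \<subseteq> torus \<Longrightarrow> measure torus_measure A = measure lebesgue A"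
  unfolding torus_measure_def by (rule measure_restrict_space) auto

lemma measure_torus_measure_torus [simp]: "measure torus_measure (torus :: (real^'d) set) = 1"
  by (subst measure_torus_measure) (simp_all add: measure_def emeasure_torus)

interpretation torus: finite_measure "torus_measure :: (real^'d) measure"
  by (rule finite_measureI) (simp add: torus_measure_def emeasure_restrict_space emeasure_torus)

lemma sets_torus_measure_Int_torus [simp]: "A \<in> sets torus_measure \<Longrightarrow> A \<inter> torus = A"
  by (simp add: sets_torus_measure_iff Int_absorb2)

lemma integrable_torus_bounded:
  fixes h :: "real^'d \<Rightarrow> 'b::{banach, second_countable_topology}"
  assumes "h \<in> borel_measurable torus_measure" "\<And>x. x \<in> torus \<Longrightarrow> norm (h x) \<le> B"
  shows "integrable torus_measure h"
  using assms by (intro torus.integrable_const_bound[where B=B] AE_I2) auto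

lemma integrable_indicator_torus [simp]:
  "A \<in> sets torus_measure \<Longrightarrow> integrable torus_measure (indicator A :: _ \<Rightarrow> real)"
  by (intro integrable_torus_bounded[where B=1]) (auto split: split_indicator)

lemma borel_measurable_cnj [measurable (raw)]:
  fixes f :: "'a \<Rightarrow> complex"
  assumes "f \<in> borel_measurable M"
  shows "(\<lambda>x. cnj (f x)) \<in> borel_measurable M"
proof -
  have "cnj \<in> borel_measurable borel"
    by (rule borel_measurable_continuous_onI) (intro continuous_intros)
  from measurable_compose[OF assms this] show ?thesis
    by (simp add: o_def)
qed

lemma continuous_imp_measurable_torus:
  fixes h :: "real^'d \<Rightarrow> 'b::euclidean_space"
  shows "continuous_on torus h \<Longrightarrow> h \<in> borel_measurable torus_measure"
  unfolding torus_measure_def by (rule continuous_imp_measurable_on_sets_lebesgue) simp_all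

lemma integrable_torus_mult_bounded:
  fixes F h :: "real^'d \<Rightarrow> complex"
  assumes F: "integrable torus_measure F"
    and h: "h \<in> borel_measurable torus_measure" "\<And>x. norm (h x) \<le> B"
  shows "integrable torus_measure (\<lambda>x. F x * h x)"
proof (rule Bochner_Integration.integrable_bound)
  show "integrable torus_measure (\<lambda>x. B *\<^sub>R F x)"
    using F by simp
  show "AE x in torus_measure. norm (F x * h x) \<le> norm (B *\<^sub>R F x)"
  proof (intro AE_I2)
    fix x
    have "norm (F x * h x) \<le> norm (F x) * B"
      unfolding norm_mult by (rule mult_left_mono[OF h(2)]) simp
    also have "\<dots> \<le> norm (B *\<^sub>R F x)"
      by (simp add: mult.commute mult_right_mono)
    finally show "norm (F x * h x) \<le> norm (B *\<^sub>R F x)" .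
  qed
qed (use F h in measurable)

lemma integral_torus_measure_eq_lborel:
  fixes h :: "real^'d \<Rightarrow> complex"
  assumes "h \<in> borel_measurable borel"
  shows "(LINT x|torus_measure. h x) = (LINT x|lborel. indicator torus x *\<^sub>R h x)"
proof -
  have "(LINT x|torus_measure. h x) = (LINT x|lebesgue. indicator torus x *\<^sub>R h x)"
    unfolding torus_measure_def by (rule integral_restrict_space) auto
  also have "\<dots> = (LINT x|lborel. indicator torus x *\<^sub>R h x)"
    by (rule integral_completion) (use assms in \<open>auto simp: torus_def\<close>)
  finally show ?thesis .
qed

section \<open>Characters and their orthogonality\<close>

lemma lat_dot_eq_inner: "lat_dot \<xi> x = (\<chi> i. real_of_int (\<xi> $ i)) \<bullet> x"
  by (simp add: lat_dot_def inner_vec_def)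

lemma lat_dot_add: "lat_dot (\<xi> + \<eta>) x = lat_dot \<xi> x + lat_dot \<eta> x"
  by (simp add: lat_dot_def sum.distrib distrib_right)

lemma lat_dot_uminus: "lat_dot (- \<xi>) x = - lat_dot \<xi> x"
  by (simp add: lat_dot_def sum_negf)

lemma lat_dot_scale: "lat_dot (k *s \<xi>) x = real_of_int k * lat_dot \<xi> x"
  by (simp add: lat_dot_def sum_distrib_left mult_ac)

lemma lat_dot_zero [simp]: "lat_dot 0 x = 0"
  by (simp add: lat_dot_def)

lemma lat_dot_axis_left: "lat_dot (axis i 1) x = x $ i"
proof -
  have "(\<chi> j. real_of_int (axis i 1 $ j)) = axis i (1::real)"
    by (simp add: vec_eq_iff axis_def)
  then show ?thesis
    by (simp add: lat_dot_eq_inner inner_commute inner_axis)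
qed

lemma lat_dot_axis_right: "lat_dot \<xi> (axis i 1) = real_of_int (\<xi> $ i)"
  by (simp add: lat_dot_eq_inner inner_axis)

definition torus_char :: "int^'d \<Rightarrow> real^'d \<Rightarrow> complex" where
  "torus_char \<xi> x = exp (2 * pi * \<i> * complex_of_real (lat_dot \<xi> x))"

lemma torus_char_add: "torus_char (\<xi> + \<eta>) x = torus_char \<xi> x * torus_char \<eta> x"
  by (simp add: torus_char_def lat_dot_add exp_add[symmetric] distrib_left)

lemma torus_char_zero [simp]: "torus_char 0 x = 1"
  by (simp add: torus_char_def)

lemma torus_char_uminus: "torus_char (- \<xi>) x = cnj (torus_char \<xi> x)"
  by (simp add: torus_char_def lat_dot_uminus exp_cnj)

lemma norm_torus_char [simp]: "norm (torus_char \<xi> x) = 1"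
  by (simp add: torus_char_def norm_exp_eq_Re)

lemma continuous_on_torus_char: "continuous_on A (torus_char \<xi>)"
  unfolding torus_char_def lat_dot_def by (intro continuous_intros)

lemma measurable_torus_char [measurable]: "torus_char \<xi> \<in> borel_measurable torus_measure"
  by (rule continuous_imp_measurable_torus[OF continuous_on_torus_char])

lemma integrable_torus_char [simp]: "integrable torus_measure (torus_char \<xi>)"
  by (rule integrable_torus_bounded[where B=1]) auto

lemma fourier_coeff_eq_integral_char:
  "fourier_coeff f \<xi> = (LINT x|torus_measure. f x * torus_char (- \<xi>) x)"
  unfolding fourier_coeff_def torus_char_def lat_dot_uminus by (simp add: mult_ac)

lemma integral_lborel_prod:
  fixes f :: "'a::euclidean_space \<Rightarrow> real \<Rightarrow> 'b::{real_normed_field, banach, second_countable_topology}"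
  assumes int: "\<And>b. b \<in> Basis \<Longrightarrow> integrable lborel (f b)"
  shows "(\<integral>x. (\<Prod>b\<in>Basis. f b (x \<bullet> b)) \<partial>(lborel::'a measure)) = (\<Prod>b\<in>Basis. \<integral>t. f b t \<partial>lborel)"
proof -
  interpret product_sigma_finite "\<lambda>_. lborel" by standard
  have meas: "\<And>b. b \<in> Basis \<Longrightarrow> f b \<in> borel_measurable lborel"
    using int by auto
  have coord: "(\<Sum>b'\<in>Basis. y b' *\<^sub>R b') \<bullet> b = y b" if "(b::'a) \<in> Basis" for y b
    using that by (simp add: inner_sum_left inner_Basis if_distrib sum.If_cases)
  have "(\<integral>x. (\<Prod>b\<in>Basis. f b (x \<bullet> b)) \<partial>(lborel::'a measure))
     = (\<integral>y. (\<Prod>b\<in>Basis. f b ((\<Sum>b'\<in>Basis. y b' *\<^sub>R b') \<bullet> b)) \<partial>(\<Pi>\<^sub>M b\<in>(Basis::'a set). lborel))"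
    by (subst lborel_eq[where 'a='a], rule integral_distr)
      (auto intro!: borel_measurable_prod meas measurable_compose[OF _ meas] simp: inner_sum_left)
  also have "\<dots> = (\<integral>y. (\<Prod>b\<in>Basis. f b (y b)) \<partial>(\<Pi>\<^sub>M b\<in>(Basis::'a set). lborel))"
    by (intro Bochner_Integration.integral_cong prod.cong) (simp_all add: coord)
  also have "\<dots> = (\<Prod>b\<in>Basis. \<integral>t. f b t \<partial>lborel)"
    by (rule product_integral_prod) (auto intro: int)
  finally show ?thesis .
qed

lemma integral_exp_int_unit_interval:
  fixes n :: int
  shows "(LINT t|lborel. indicator {0..1::real} t *\<^sub>R exp (2 * pi * \<i> * complex_of_real (of_int n * t)))
     = (if n = 0 then 1 else 0)"
proof -
  define c where "c = 2 * pi * \<i> * (of_int n :: complex)"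
  have "(LINT t|lborel. indicator {0..1::real} t *\<^sub>R exp (2 * pi * \<i> * complex_of_real (of_int n * t)))
     = (LBINT t=ereal 0..ereal 1. exp (c * of_real t))"
    by (subst interval_integral_Icc) (simp_all add: set_lebesgue_integral_def c_def mult_ac)
  also have "\<dots> = exp (c * of_real 1) / c - exp (c * of_real 0) / c" if "n \<noteq> 0"
  proof (rule interval_integral_FTC_finite)
    show "continuous_on {min 0 1..max 0 1} (\<lambda>t::real. exp (c * of_real t))"
      by (intro continuous_intros)
    fix t :: real
    have "((\<lambda>z. exp (c * z) / c) has_field_derivative exp (c * of_real t)) (at (of_real t))"
      using that by (auto intro!: derivative_eq_intros simp: c_def)
    then show "((\<lambda>t. exp (c * of_real t) / c) has_vector_derivative exp (c * of_real t))
        (at t within {min 0 1..max 0 1})"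
      by (rule has_vector_derivative_real_field)
  qed
  moreover have "exp (c * of_real 1) = 1"
    using exp_integer_2pi[of "of_int n"] by (simp add: c_def mult_ac)
  moreover have "(LBINT t=ereal 0..ereal 1. exp (c * of_real t)) = 1" if "n = 0"
    using that by (subst interval_integral_Icc) (simp_all add: set_lebesgue_integral_def c_def)
  ultimately show ?thesis
    by auto
qed

lemma indicator_cbox_eq_prod:
  "indicator (cbox l u) x = (\<Prod>b\<in>Basis. indicator {l \<bullet> b .. u \<bullet> b} (x \<bullet> b) :: real)"
  by (auto simp: cbox_def split: split_indicator)

lemma lat_dot_eq_sum_Basis: "lat_dot \<xi> x = (\<Sum>b\<in>Basis. lat_dot \<xi> b * (x \<bullet> b))"
  by (simp add: lat_dot_eq_inner euclidean_inner[of _ x] mult.commute)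

lemma integral_torus_char [simp]:
  fixes \<xi> :: "int^'d"
  shows "(LINT x|torus_measure. torus_char \<xi> x) = (if \<xi> = 0 then 1 else 0)"
proof -
  define h :: "real^'d \<Rightarrow> real \<Rightarrow> complex" where "h b t = indicator {0..1::real} t *\<^sub>R
      exp (2 * pi * \<i> * complex_of_real (lat_dot \<xi> b * t))" for b t
  have "indicator torus x *\<^sub>R torus_char \<xi> x = (\<Prod>b\<in>Basis. h b (x \<bullet> b))" for x :: "real^'d"
  proof -
    have "torus_char \<xi> x = (\<Prod>b\<in>Basis. exp (2 * pi * \<i> * complex_of_real (lat_dot \<xi> b * (x \<bullet> b))))"
      unfolding torus_char_def lat_dot_eq_sum_Basis[of \<xi> x]
      by (simp add: sum_distrib_left exp_sum)
    then show ?thesis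
      by (simp add: h_def torus_def indicator_cbox_eq_prod[of 0 One] inner_Basis
          scaleR_conv_of_real prod.distrib of_real_prod)
  qed
  then have "(LINT x|torus_measure. torus_char \<xi> x) = (\<integral>x. (\<Prod>b\<in>Basis. h b (x \<bullet> b)) \<partial>lborel)"
    by (simp add: integral_torus_measure_eq_lborel borel_measurable_continuous_onI continuous_on_torus_char)
  also have "\<dots> = (\<Prod>b\<in>Basis. \<integral>t. h b t \<partial>lborel)"
    unfolding h_def by (rule integral_lborel_prod) (auto intro!: borel_integrable_compact continuous_intros)
  also have "\<dots> = (\<Prod>i\<in>UNIV. \<integral>t. h (axis i 1) t \<partial>lborel)"
  proof -
    have "(Basis :: (real^'d) set) = range (\<lambda>i. axis i 1)"
      by (auto simp: Basis_vec_def)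
    moreover have "inj (\<lambda>i. axis i (1::real))"
      by (simp add: inj_on_def axis_eq_axis)
    ultimately show ?thesis
      using prod.reindex[of "\<lambda>i. axis i (1::real)" UNIV "\<lambda>b. \<integral>t. h b t \<partial>lborel"]
      by (simp add: o_def)
  qed
  also have "\<dots> = (\<Prod>i\<in>UNIV. if \<xi> $ i = 0 then 1 else 0)"
    by (simp only: h_def lat_dot_axis_right integral_exp_int_unit_interval)
  also have "\<dots> = (if \<xi> = 0 then 1 else 0)"
    by (auto simp: vec_eq_iff prod_zero)
  finally show ?thesis .
qed

lemma integral_torus_char_add:
  "integrable torus_measure h \<Longrightarrow>
    (LINT x|torus_measure. a * torus_char \<xi> x + h x) = (if \<xi> = 0 then a else 0) + (LINT x|torus_measure. h x)"
  by (simp add: integral_torus_char)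

section \<open>Trigonometric polynomials\<close>

inductive trig_poly_on :: "(int^'d) set \<Rightarrow> (real^'d \<Rightarrow> complex) \<Rightarrow> bool" for P where
  zero: "trig_poly_on P (\<lambda>x. 0)"
| char_add: "\<xi> \<in> P \<Longrightarrow> trig_poly_on P h \<Longrightarrow> trig_poly_on P (\<lambda>x. a * torus_char \<xi> x + h x)"

lemma trig_poly_on_bounded: "trig_poly_on P h \<Longrightarrow> \<exists>B. \<forall>x. norm (h x) \<le> B"
proof (induction rule: trig_poly_on.induct)
  case (char_add \<xi> h a)
  then obtain B where "\<forall>x. norm (h x) \<le> B"
    by blast
  then have "norm (a * torus_char \<xi> x + h x) \<le> norm a + B" for x
    by (intro norm_triangle_le add_mono) (simp_all add: norm_mult)
  then show ?case
    by blast
qed (rule exI[of _ 0], simp)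

lemma trig_poly_on_continuous: "trig_poly_on P h \<Longrightarrow> continuous_on A h"
  by (induction rule: trig_poly_on.induct) (auto intro!: continuous_intros continuous_on_torus_char)

lemma trig_poly_on_measurable: "trig_poly_on P h \<Longrightarrow> h \<in> borel_measurable torus_measure"
  by (rule continuous_imp_measurable_torus[OF trig_poly_on_continuous])

lemma trig_poly_on_integrable: "trig_poly_on P h \<Longrightarrow> integrable torus_measure h"
  by (metis integrable_torus_bounded trig_poly_on_bounded trig_poly_on_measurable)

lemma trig_poly_on_add:
  "trig_poly_on P h \<Longrightarrow> trig_poly_on P k \<Longrightarrow> trig_poly_on P (\<lambda>x. h x + k x)"
proof (induction rule: trig_poly_on.induct)
  case (char_add \<xi> h a)
  then show ?case
    using trig_poly_on.char_add[of \<xi> P "\<lambda>x. h x + k x" a] by (simp add: add.assoc)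
qed simp

lemma trig_poly_on_scale: "trig_poly_on P h \<Longrightarrow> trig_poly_on P (\<lambda>x. c * h x)"
proof (induction rule: trig_poly_on.induct)
  case (char_add \<xi> h a)
  then show ?case
    using trig_poly_on.char_add[of \<xi> P "\<lambda>x. c * h x" "c * a"] by (simp add: algebra_simps)
qed (simp add: trig_poly_on.zero)

lemma trig_poly_on_char: "\<xi> \<in> P \<Longrightarrow> trig_poly_on P (torus_char \<xi>)"
  using trig_poly_on.char_add[OF _ trig_poly_on.zero, of \<xi> P 1] by simp

lemma trig_poly_on_const: "0 \<in> P \<Longrightarrow> trig_poly_on P (\<lambda>x. c)"
  using trig_poly_on.char_add[OF _ trig_poly_on.zero, of 0 P c] by simp

lemma trig_poly_on_sum:
  "(\<And>i. i \<in> I \<Longrightarrow> trig_poly_on P (h i)) \<Longrightarrow> trig_poly_on P (\<lambda>x. \<Sum>i\<in>I. h i x)"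
  by (induction I rule: infinite_finite_induct) (auto intro: trig_poly_on.zero trig_poly_on_add)

context
  fixes P :: "(int^'d) set"
  assumes add_closed: "\<And>\<xi> \<eta>. \<xi> \<in> P \<Longrightarrow> \<eta> \<in> P \<Longrightarrow> \<xi> + \<eta> \<in> P"
begin

lemma trig_poly_on_char_mult:
  assumes "\<xi> \<in> P"
  shows "trig_poly_on P h \<Longrightarrow> trig_poly_on P (\<lambda>x. torus_char \<xi> x * h x)"
proof (induction rule: trig_poly_on.induct)
  case (char_add \<eta> h a)
  then show ?case
    using trig_poly_on.char_add[OF add_closed[OF assms char_add(1)] char_add(3), of a]
    by (simp add: torus_char_add algebra_simps)
qed (simp add: trig_poly_on.zero)

lemma trig_poly_on_mult:
  "trig_poly_on P h \<Longrightarrow> trig_poly_on P k \<Longrightarrow> trig_poly_on P (\<lambda>x. h x * k x)"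
proof (induction rule: trig_poly_on.induct)
  case (char_add \<xi> h a)
  have "trig_poly_on P (\<lambda>x. a * (torus_char \<xi> x * k x) + h x * k x)"
    using char_add by (intro trig_poly_on_add trig_poly_on_scale trig_poly_on_char_mult)
  then show ?case
    by (simp add: algebra_simps)
qed (simp add: trig_poly_on.zero)

lemma trig_poly_on_power:
  "0 \<in> P \<Longrightarrow> trig_poly_on P h \<Longrightarrow> trig_poly_on P (\<lambda>x. h x ^ n)"
  by (induction n) (auto intro: trig_poly_on_const trig_poly_on_mult)

end

lemma trig_poly_on_UNIV_cnj: "trig_poly_on UNIV h \<Longrightarrow> trig_poly_on UNIV (\<lambda>x. cnj (h x))"
proof (induction rule: trig_poly_on.induct)
  case (char_add \<xi> h a)
  then show ?case
    using trig_poly_on.char_add[of "- \<xi>" UNIV "\<lambda>x. cnj (h x)" "cnj a"] by (simp add: torus_char_uminus)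
qed (simp add: trig_poly_on.zero)

lemma trig_poly_on_UNIV_Re: "trig_poly_on UNIV h \<Longrightarrow> trig_poly_on UNIV (\<lambda>x. complex_of_real (Re (h x)))"
proof -
  assume h: "trig_poly_on UNIV h"
  have "complex_of_real (Re z) = (1 / 2) * (z + cnj z)" for z
    by (simp add: complex_eq_iff)
  then show ?thesis
    using h by (simp only:) (intro trig_poly_on_scale trig_poly_on_add trig_poly_on_UNIV_cnj)
qed

lemma trig_poly_on_UNIV_Im: "trig_poly_on UNIV h \<Longrightarrow> trig_poly_on UNIV (\<lambda>x. complex_of_real (Im (h x)))"
proof -
  assume h: "trig_poly_on UNIV h"
  have "complex_of_real (Im z) = (- \<i> / 2) * (z + (- 1) * cnj z)" for z
    by (simp add: complex_eq_iff)
  then show ?thesis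
    using h by (simp only:) (intro trig_poly_on_scale trig_poly_on_add trig_poly_on_UNIV_cnj)
qed

section \<open>Analytic trigonometric polynomials\<close>

(* The frequencies outside the half-space S: the possible spectrum of a function whose Fourier
   coefficients vanish on S. Trigonometric polynomials with these frequencies play the role of
   analytic polynomials on the circle. *)
definition analytic_freqs :: "(int^'d) set \<Rightarrow> (int^'d) set" where
  "analytic_freqs S = insert 0 (uminus ` S)"

lemma half_space_add_analytic_freqs:
  assumes S: "half_space S" and "\<xi> \<in> analytic_freqs S" "\<eta> \<in> analytic_freqs S"
  shows "\<xi> + \<eta> \<in> analytic_freqs S"
proof (cases "\<xi> = 0 \<or> \<eta> = 0")
  case False
  then have "- \<xi> + - \<eta> \<in> S"
    using assms by (auto simp: analytic_freqs_def half_space_def)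
  then have "- (- \<xi> + - \<eta>) \<in> uminus ` S"
    by blast
  then show ?thesis
    by (simp add: analytic_freqs_def add.commute)
qed (use assms in auto)

lemma half_space_analytic_freqs_add_eq_0:
  assumes S: "half_space S" and \<xi>: "\<xi> \<in> analytic_freqs S" and \<eta>: "\<eta> \<in> analytic_freqs S"
  shows "\<xi> + \<eta> = 0 \<longleftrightarrow> \<xi> = 0 \<and> \<eta> = 0"
proof
  assume sum: "\<xi> + \<eta> = 0"
  show "\<xi> = 0 \<and> \<eta> = 0"
  proof (rule ccontr)
    assume "\<not> (\<xi> = 0 \<and> \<eta> = 0)"
    moreover have \<eta>_eq: "\<eta> = - \<xi>"
      using sum by (simp add: eq_neg_iff_add_eq_0 add.commute)
    ultimately have "\<xi> \<noteq> 0"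
      by auto
    then have "- \<xi> \<in> S" "\<xi> \<in> S"
      using \<xi> \<eta> \<eta>_eq by (auto simp: analytic_freqs_def)
    then have "- \<xi> + \<xi> \<in> S"
      using S unfolding half_space_def by blast
    then show False
      using S by (simp add: half_space_def)
  qed
qed simp

lemma half_space_analytic_freqs_or_uminus:
  assumes "half_space S"
  shows "\<xi> \<in> analytic_freqs S \<or> - \<xi> \<in> analytic_freqs S"
proof -
  have "\<xi> \<in> uminus ` S" if "- \<xi> \<in> S"
    using that by (metis image_eqI minus_minus)
  then show ?thesis
    using assms by (auto simp: half_space_def analytic_freqs_def)
qed

lemma analytic_trig_poly_power:
  "half_space S \<Longrightarrow> trig_poly_on (analytic_freqs S) h \<Longrightarrow> trig_poly_on (analytic_freqs S) (\<lambda>x. h x ^ n)"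
  by (intro trig_poly_on_power half_space_add_analytic_freqs) (simp_all add: analytic_freqs_def)

lemma integral_char_mult_analytic_trig_poly:
  assumes S: "half_space S" and \<xi>: "\<xi> \<in> analytic_freqs S"
  shows "trig_poly_on (analytic_freqs S) h \<Longrightarrow>
    (LINT x|torus_measure. torus_char \<xi> x * h x) = (if \<xi> = 0 then LINT x|torus_measure. h x else 0)"
proof (induction rule: trig_poly_on.induct)
  case (char_add \<eta> h a)
  have "trig_poly_on (analytic_freqs S) (\<lambda>x. torus_char \<xi> x * h x)"
    using char_add \<xi> by (intro trig_poly_on_char_mult half_space_add_analytic_freqs[OF S])
  moreover have "torus_char \<xi> x * (a * torus_char \<eta> x + h x)
      = a * torus_char (\<xi> + \<eta>) x + torus_char \<xi> x * h x" for x
    by (simp add: torus_char_add algebra_simps)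
  ultimately have "(LINT x|torus_measure. torus_char \<xi> x * (a * torus_char \<eta> x + h x))
      = (if \<xi> + \<eta> = 0 then a else 0) + (LINT x|torus_measure. torus_char \<xi> x * h x)"
    by (simp add: trig_poly_on_integrable integral_torus_char integral_torus_char_add)
  also have "\<dots> = (if \<xi> = 0 then LINT x|torus_measure. a * torus_char \<eta> x + h x else 0)"
    using char_add half_space_analytic_freqs_add_eq_0[OF S \<xi> char_add(1)]
    by (simp add: trig_poly_on_integrable integral_torus_char_add)
  finally show ?case .
qed simp

lemma integral_analytic_trig_poly_mult:
  assumes S: "half_space S" and k: "trig_poly_on (analytic_freqs S) k"
  shows "trig_poly_on (analytic_freqs S) h \<Longrightarrow>
    (LINT x|torus_measure. h x * k x) = (LINT x|torus_measure. h x) * (LINT x|torus_measure. k x)"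
proof (induction rule: trig_poly_on.induct)
  case (char_add \<xi> h a)
  have "trig_poly_on (analytic_freqs S) (\<lambda>x. torus_char \<xi> x * k x)"
    using char_add k by (intro trig_poly_on_char_mult half_space_add_analytic_freqs[OF S])
  moreover have "trig_poly_on (analytic_freqs S) (\<lambda>x. h x * k x)"
    using char_add k by (intro trig_poly_on_mult half_space_add_analytic_freqs[OF S])
  ultimately have "(LINT x|torus_measure. (a * torus_char \<xi> x + h x) * k x)
      = a * (LINT x|torus_measure. torus_char \<xi> x * k x) + (LINT x|torus_measure. h x * k x)"
    by (simp add: distrib_right mult.assoc trig_poly_on_integrable)
  also have "\<dots> = (LINT x|torus_measure. a * torus_char \<xi> x + h x) * (LINT x|torus_measure. k x)"
    using char_add k
    by (simp add: integral_char_mult_analytic_trig_poly[OF S] trig_poly_on_integrable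
        integral_torus_char_add integral_torus_char distrib_right)
  finally show ?case .
qed simp

lemma integral_analytic_trig_poly_power:
  assumes S: "half_space S" and h: "trig_poly_on (analytic_freqs S) h"
  shows "(LINT x|torus_measure. h x ^ n) = (LINT x|torus_measure. h x) ^ n"
proof (induction n)
  case (Suc n)
  have "trig_poly_on (analytic_freqs S) (\<lambda>x. h x ^ n)"
    using S h by (rule analytic_trig_poly_power)
  then have "(LINT x|torus_measure. h x ^ n * h x) = (LINT x|torus_measure. h x ^ n) * (LINT x|torus_measure. h x)"
    by (rule integral_analytic_trig_poly_mult[OF S h])
  then show ?case
    using Suc by (simp add: mult.commute)
qed simp

lemma integral_mult_analytic_trig_poly:
  assumes F: "integrable torus_measure F" and vanish: "\<forall>\<xi>\<in>S. fourier_coeff F \<xi> = 0"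
  shows "trig_poly_on (analytic_freqs S) h \<Longrightarrow>
    (LINT x|torus_measure. F x * h x) = fourier_coeff F 0 * (LINT x|torus_measure. h x)"
proof (induction rule: trig_poly_on.induct)
  case (char_add \<xi> h a)
  have "(LINT x|torus_measure. F x * torus_char \<xi> x) = (if \<xi> = 0 then fourier_coeff F 0 else 0)"
    using char_add(1) vanish by (auto simp: analytic_freqs_def fourier_coeff_eq_integral_char)
  moreover obtain B where "\<And>x. norm (h x) \<le> B"
    using trig_poly_on_bounded[OF char_add(2)] by blast
  then have "integrable torus_measure (\<lambda>x. F x * h x)"
    using char_add by (intro integrable_torus_mult_bounded[OF F] trig_poly_on_measurable)
  then have "(LINT x|torus_measure. F x * (a * torus_char \<xi> x + h x))
      = a * (LINT x|torus_measure. F x * torus_char \<xi> x) + (LINT x|torus_measure. F x * h x)"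
    using F by (simp add: distrib_left mult.left_commute integrable_torus_mult_bounded[where B=1])
  ultimately show ?case
    using char_add by (simp add: trig_poly_on_integrable distrib_left)
qed simp

lemma norm_exp_partial_sum_le:
  fixes z :: "'a::{real_normed_algebra_1, banach}"
  shows "norm (\<Sum>n<N. z ^ n /\<^sub>R fact n) \<le> exp (norm z)"
proof -
  have "norm (\<Sum>n<N. z ^ n /\<^sub>R fact n) \<le> (\<Sum>n<N. norm z ^ n /\<^sub>R fact n)"
    by (rule order.trans[OF norm_sum sum_mono]) (simp add: divide_right_mono norm_power_ineq)
  also have "\<dots> \<le> (\<Sum>n. norm z ^ n /\<^sub>R fact n)"
    by (rule sum_le_suminf[OF summable_exp_generic]) auto
  also have "\<dots> = exp (norm z)"
    by (simp add: exp_def)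
  finally show ?thesis .
qed

lemma integral_mult_exp_analytic_trig_poly:
  assumes S: "half_space S" and F: "integrable torus_measure F"
    and vanish: "\<forall>\<xi>\<in>S. fourier_coeff F \<xi> = 0" and h: "trig_poly_on (analytic_freqs S) h"
  shows "(LINT x|torus_measure. F x * exp (h x)) = fourier_coeff F 0 * exp (LINT x|torus_measure. h x)"
proof -
  obtain B where B: "\<And>x. norm (h x) \<le> B"
    using trig_poly_on_bounded[OF h] by blast
  define E where "E N x = (\<Sum>n<N. h x ^ n /\<^sub>R fact n)" for N x
  have h_power: "trig_poly_on (analytic_freqs S) (\<lambda>x. h x ^ n)" for n
    using S h by (rule analytic_trig_poly_power)
  have "(\<lambda>N. LINT x|torus_measure. F x * E N x) \<longlonglongrightarrow> (LINT x|torus_measure. F x * exp (h x))"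
  proof (rule integral_dominated_convergence[where w="\<lambda>x. norm (F x) * exp B"])
    show "(\<lambda>x. F x * E N x) \<in> borel_measurable torus_measure" for N
      unfolding E_def using F h by (measurable, auto intro: trig_poly_on_measurable)
    show "(\<lambda>x. F x * exp (h x)) \<in> borel_measurable torus_measure"
      using F h by (measurable, auto intro: trig_poly_on_measurable)
    show "integrable torus_measure (\<lambda>x. norm (F x) * exp B)"
      using F by simp
    show "AE x in torus_measure. (\<lambda>N. F x * E N x) \<longlonglongrightarrow> F x * exp (h x)"
      unfolding E_def by (intro AE_I2 tendsto_mult_left) (rule exp_converges[unfolded sums_def])
    show "AE x in torus_measure. norm (F x * E N x) \<le> norm (F x) * exp B" for N
      unfolding E_def norm_mult
      by (intro AE_I2 mult_left_mono order.trans[OF norm_exp_partial_sum_le]) (simp_all add: B)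
  qed
  moreover have "(LINT x|torus_measure. F x * E N x)
      = fourier_coeff F 0 * (\<Sum>n<N. (LINT x|torus_measure. h x) ^ n /\<^sub>R fact n)" for N
  proof -
    have "trig_poly_on (analytic_freqs S) (E N)"
      unfolding E_def scaleR_conv_of_real by (intro trig_poly_on_sum trig_poly_on_scale h_power)
    then have "(LINT x|torus_measure. F x * E N x) = fourier_coeff F 0 * (LINT x|torus_measure. E N x)"
      by (rule integral_mult_analytic_trig_poly[OF F vanish])
    also have "(LINT x|torus_measure. E N x) = (\<Sum>n<N. (LINT x|torus_measure. h x ^ n) /\<^sub>R fact n)"
      unfolding E_def using trig_poly_on_integrable[OF h_power] by (simp add: Bochner_Integration.integral_sum)
    finally show ?thesis
      by (simp add: integral_analytic_trig_poly_power[OF S h])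
  qed
  moreover have "(\<lambda>N. fourier_coeff F 0 * (\<Sum>n<N. (LINT x|torus_measure. h x) ^ n /\<^sub>R fact n))
      \<longlonglongrightarrow> fourier_coeff F 0 * exp (LINT x|torus_measure. h x)"
    by (intro tendsto_mult_left) (rule exp_converges[unfolded sums_def])
  ultimately show ?thesis
    using LIMSEQ_unique by auto
qed

lemma trig_poly_on_UNIV_Re_analytic:
  assumes S: "half_space S"
  shows "trig_poly_on UNIV h \<Longrightarrow> \<exists>h'. trig_poly_on (analytic_freqs S) h' \<and> (\<forall>x. Re (h' x) = Re (h x))"
proof (induction rule: trig_poly_on.induct)
  case zero
  then show ?case
    using trig_poly_on.zero by fastforce
next
  case (char_add \<xi> h a)
  then obtain h' where h': "trig_poly_on (analytic_freqs S) h'" "\<forall>x. Re (h' x) = Re (h x)"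
    by blast
  consider "\<xi> \<in> analytic_freqs S" | "- \<xi> \<in> analytic_freqs S"
    using half_space_analytic_freqs_or_uminus[OF S] by blast
  then show ?case
  proof cases
    case 1
    then show ?thesis
      using h' by (intro exI[of _ "\<lambda>x. a * torus_char \<xi> x + h' x"]) (auto intro: trig_poly_on.char_add)
  next
    case 2
    have "Re (cnj a * torus_char (- \<xi>) x) = Re (a * torus_char \<xi> x)" for x
      by (simp add: torus_char_uminus)
    then show ?thesis
      using 2 h' by (intro exI[of _ "\<lambda>x. cnj a * torus_char (- \<xi>) x + h' x"])
        (auto intro: trig_poly_on.char_add)
  qed
qed

(* The Jensen-type inequality log |F^(0)| <= integral of log |F|, tested against Re h. *)
lemma norm_fourier_coeff_0_mult_exp_le:
  assumes S: "half_space S" and F: "integrable torus_measure F"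
    and vanish: "\<forall>\<xi>\<in>S. fourier_coeff F \<xi> = 0" and h: "trig_poly_on UNIV h"
  shows "norm (fourier_coeff F 0) * exp (LINT x|torus_measure. Re (h x))
    \<le> (LINT x|torus_measure. norm (F x) * exp (Re (h x)))"
proof -
  obtain h' where h': "trig_poly_on (analytic_freqs S) h'" and Re: "\<And>x. Re (h' x) = Re (h x)"
    using trig_poly_on_UNIV_Re_analytic[OF S h] by blast
  have "(LINT x|torus_measure. Re (h x)) = Re (LINT x|torus_measure. h' x)"
    using integral_Re[OF trig_poly_on_integrable[OF h']] by (simp add: Re)
  then have "norm (fourier_coeff F 0) * exp (LINT x|torus_measure. Re (h x))
      = norm (fourier_coeff F 0 * exp (LINT x|torus_measure. h' x))"
    by (simp add: norm_mult norm_exp_eq_Re)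
  also have "\<dots> = norm (LINT x|torus_measure. F x * exp (h' x))"
    by (simp add: integral_mult_exp_analytic_trig_poly[OF S F vanish h'])
  also have "\<dots> \<le> (LINT x|torus_measure. norm (F x * exp (h' x)))"
    by (rule integral_norm_bound)
  also have "\<dots> = (LINT x|torus_measure. norm (F x) * exp (Re (h x)))"
    by (simp add: norm_mult norm_exp_eq_Re Re)
  finally show ?thesis .
qed

section \<open>Approximating indicator functions by trigonometric polynomials\<close>

(* Polynomials in torus_embedding x are trigonometric polynomials, so the Stone-Weierstrass
   theorem on the compact image of the torus yields trigonometric approximations. *)
definition torus_embedding :: "real^'d \<Rightarrow> (real^'d) \<times> (real^'d)" where
  "torus_embedding x = ((\<chi> i. cos (2 * pi * x $ i)), (\<chi> i. sin (2 * pi * x $ i)))"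

lemma continuous_on_torus_embedding: "continuous_on A torus_embedding"
  unfolding torus_embedding_def by (intro continuous_intros continuous_on_vec_lambda)

lemma One_vec_nth [simp]: "(One :: real^'d) $ i = 1"
proof -
  have "axis i (1::real) \<in> Basis"
    by (auto simp: Basis_vec_def)
  then have "(One :: real^'d) \<bullet> axis i 1 = 1"
    by (simp add: inner_Basis inner_sum_left)
  then show ?thesis
    by (simp add: inner_axis)
qed

lemma torus_embedding_eq_imp_eq:
  assumes c: "c \<in> box 0 One" and y: "y \<in> torus" and eq: "torus_embedding c = torus_embedding y"
  shows "c = y"
proof -
  have "c $ i = y $ i" for i
  proof -
    have "sin (2 * pi * c $ i) = sin (2 * pi * y $ i) \<and> cos (2 * pi * c $ i) = cos (2 * pi * y $ i)"
      using eq by (simp add: torus_embedding_def vec_eq_iff)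
    then obtain n :: int where "2 * pi * c $ i = 2 * pi * y $ i + 2 * pi * n"
      by (auto simp: sin_cos_eq_iff)
    then have "2 * pi * (c $ i - y $ i - n) = 0"
      by (simp add: algebra_simps)
    then have "c $ i = y $ i + n"
      by simp
    moreover have "0 < c $ i" "c $ i < 1" "0 \<le> y $ i" "y $ i \<le> 1"
      using c y unfolding torus_def mem_box_cart One_vec_nth zero_index by auto
    ultimately have "- 1 < n" "n < 1"
      by linarith+
    then show ?thesis
      using \<open>c $ i = y $ i + n\<close> by simp
  qed
  then show ?thesis
    by (simp add: vec_eq_iff)
qed

lemma trig_poly_on_polynomial_torus_embedding:
  fixes p :: "(real^'d) \<times> (real^'d) \<Rightarrow> real"
  assumes "real_polynomial_function p"
  shows "trig_poly_on UNIV (\<lambda>x. complex_of_real (p (torus_embedding x)))"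
  using assms
proof (induction rule: real_polynomial_function.induct)
  case (linear p)
  have coord: "trig_poly_on UNIV (\<lambda>x. complex_of_real (torus_embedding x \<bullet> b))"
    if b: "b \<in> Basis" for b :: "(real^'d) \<times> (real^'d)"
  proof -
    obtain u where u: "u \<in> Basis" "b = (u, 0) \<or> b = (0, u)"
      using b by (auto simp: Basis_prod_def)
    moreover obtain i where "u = axis i 1"
      using u(1) by (auto simp: Basis_vec_def)
    moreover have "torus_embedding x \<bullet> (axis i 1, 0) = Re (torus_char (axis i 1) x)"
      "torus_embedding x \<bullet> (0, axis i 1) = Im (torus_char (axis i 1) x)" for x
      by (simp_all add: torus_embedding_def inner_Pair_0 inner_axis torus_char_def
          lat_dot_axis_left Re_exp Im_exp mult_ac)
    ultimately show ?thesis
      using trig_poly_on_UNIV_Re[OF trig_poly_on_char] trig_poly_on_UNIV_Im[OF trig_poly_on_char]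
      by auto
  qed
  have lin: "linear p"
    using linear by (rule bounded_linear.linear)
  have rep: "p z = (\<Sum>b\<in>Basis. (z \<bullet> b) * p b)" for z
  proof -
    have "p z = p (\<Sum>b\<in>Basis. (z \<bullet> b) *\<^sub>R b)"
      by (simp add: euclidean_representation)
    also have "\<dots> = (\<Sum>b\<in>Basis. (z \<bullet> b) * p b)"
      by (simp add: linear_sum[OF lin] linear_scale[OF lin])
    finally show ?thesis .
  qed
  have "complex_of_real (p (torus_embedding x))
      = (\<Sum>b\<in>Basis. complex_of_real (p b) * complex_of_real (torus_embedding x \<bullet> b))" for x
    by (subst rep) (simp add: mult.commute)
  then show ?case
    by (simp only:) (intro trig_poly_on_sum trig_poly_on_scale coord)
qed (auto intro: trig_poly_on_const trig_poly_on_add trig_poly_on_mult)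

lemma lebesgue_closed_open_approx:
  fixes S :: "'a::euclidean_space set"
  assumes S: "S \<in> sets lebesgue" and \<epsilon>: "\<epsilon> > 0"
  obtains C U where "closed C" "open U" "C \<subseteq> S" "S \<subseteq> U" "U - C \<in> lmeasurable"
    "measure lebesgue (U - C) < \<epsilon>"
proof -
  obtain C where C: "closed C" "C \<subseteq> S" "S - C \<in> lmeasurable" "emeasure lebesgue (S - C) < ennreal (\<epsilon>/2)"
    using sets_lebesgue_inner_closed[OF S, of "\<epsilon>/2"] \<epsilon> by auto
  obtain U where U: "open U" "S \<subseteq> U" "U - S \<in> lmeasurable" "emeasure lebesgue (U - S) < ennreal (\<epsilon>/2)"
    using sets_lebesgue_outer_open[OF S, of "\<epsilon>/2"] \<epsilon> by auto
  have split: "U - C = (U - S) \<union> (S - C)"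
    using C U by auto
  have "measure lebesgue (U - C) \<le> measure lebesgue (U - S) + measure lebesgue (S - C)"
    unfolding split using C U by (intro measure_Un_le) auto
  also have "\<dots> < \<epsilon>/2 + \<epsilon>/2"
    using C U by (intro add_strict_mono) (simp_all add: emeasure_eq_measure2 ennreal_less_iff)
  finally show thesis
    using C U by (intro that[of C U]) (auto simp: split)
qed

lemma torus_embedding_urysohn:
  assumes C: "closed C" "C \<subseteq> box 0 One" and U: "open U" "C \<subseteq> U"
  obtains F :: "(real^'d) \<times> (real^'d) \<Rightarrow> real"
  where "continuous_on UNIV F" "\<And>z. 0 \<le> F z \<and> F z \<le> 1"
    "\<And>x. x \<in> C \<Longrightarrow> F (torus_embedding x) = 1"
    "\<And>x. x \<in> torus \<Longrightarrow> x \<notin> U \<Longrightarrow> F (torus_embedding x) = 0"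
proof -
  have "compact C"
    using C by (metis box_subset_cbox bounded_cbox bounded_subset compact_eq_bounded_closed subset_trans)
  moreover have "compact (torus - U)"
    using U(1) unfolding torus_def compact_eq_bounded_closed Diff_eq
    by (intro conjI closed_Int closed_Compl bounded_Int) auto
  ultimately have "closed (torus_embedding ` (torus - U))" "closed (torus_embedding ` C)"
    by (simp_all add: compact_imp_closed compact_continuous_image continuous_on_torus_embedding)
  moreover have "torus_embedding ` (torus - U) \<inter> torus_embedding ` C = {}"
  proof (rule ccontr)
    assume "torus_embedding ` (torus - U) \<inter> torus_embedding ` C \<noteq> {}"
    then obtain y c where "y \<in> torus" "y \<notin> U" "c \<in> C" "torus_embedding c = torus_embedding y"
      by force
    moreover from this have "c = y"
      using C by (intro torus_embedding_eq_imp_eq) auto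
    ultimately show False
      using U by auto
  qed
  ultimately obtain F :: "(real^'d) \<times> (real^'d) \<Rightarrow> real" where F: "continuous_on UNIV F"
    "\<And>z. F z \<in> closed_segment 0 1" "\<And>z. z \<in> torus_embedding ` (torus - U) \<Longrightarrow> F z = 0"
    "\<And>z. z \<in> torus_embedding ` C \<Longrightarrow> F z = 1"
    by (rule Urysohn[where a=0 and b=1]) blast
  then show thesis
    by (intro that[of F]) (auto simp: closed_segment_eq_real_ivl)
qed

lemma continuous_approx_indicator_torus:
  fixes A :: "(real^'d) set"
  assumes A: "A \<in> sets torus_measure" and \<epsilon>: "\<epsilon> > 0"
  obtains F :: "(real^'d) \<times> (real^'d) \<Rightarrow> real"
  where "continuous_on UNIV F" "\<And>z. 0 \<le> F z \<and> F z \<le> 1"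
    "(LINT x|torus_measure. \<bar>F (torus_embedding x) - indicator A x\<bar>) \<le> \<epsilon>"
proof -
  define B :: "(real^'d) set" where "B = box 0 One"
  have "A \<inter> B \<in> sets lebesgue"
    using A by (metis B_def fmeasurableD lmeasurable_box sets.Int sets_torus_measure_iff)
  then obtain C U where C: "closed C" "C \<subseteq> A \<inter> B" and U: "open U" "A \<inter> B \<subseteq> U"
    and UC: "U - C \<in> lmeasurable" "measure lebesgue (U - C) < \<epsilon>"
    using lebesgue_closed_open_approx \<epsilon> by metis
  obtain F :: "(real^'d) \<times> (real^'d) \<Rightarrow> real" where F: "continuous_on UNIV F" "\<And>z. 0 \<le> F z \<and> F z \<le> 1"
    "\<And>x. x \<in> C \<Longrightarrow> F (torus_embedding x) = 1"
    "\<And>x. x \<in> torus \<Longrightarrow> x \<notin> U \<Longrightarrow> F (torus_embedding x) = 0"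
    using torus_embedding_urysohn[OF C(1) _ U(1)] C U by (metis B_def le_inf_iff subset_trans)
  define D where "D = torus \<inter> ((U - C) \<union> (torus - B))"
  have bound: "\<bar>F (torus_embedding x) - indicator A x\<bar> \<le> indicator D x" if "x \<in> torus" for x
    using that F(2)[of "torus_embedding x"] F(3,4)[of x] C U
    by (cases "x \<in> D") (auto simp: D_def split: split_indicator)
  have null: "negligible (torus - B)"
    unfolding torus_def B_def by (rule negligible_frontier_interval)
  have D_leb: "D \<in> sets lebesgue"
    using UC(1) null unfolding D_def by (intro sets.Int sets.Un) (auto simp: negligible_iff_measure)
  then have D_tm: "D \<in> sets torus_measure"
    by (auto simp: sets_torus_measure_iff D_def)
  have "measure torus_measure D \<le> measure lebesgue ((U - C) \<union> (torus - B))"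
    using D_leb UC(1) null
    by (auto simp: measure_torus_measure D_def negligible_iff_measure intro!: measure_mono_fmeasurable)
  also have "\<dots> \<le> measure lebesgue (U - C) + measure lebesgue (torus - B)"
    using UC(1) null by (intro measure_Un_le) (auto simp: negligible_iff_measure)
  finally have D_small: "measure torus_measure D < \<epsilon>"
    using UC(2) null by (simp add: negligible_imp_measure0)
  have "(LINT x|torus_measure. \<bar>F (torus_embedding x) - indicator A x\<bar>) \<le> (LINT x|torus_measure. indicator D x)"
  proof (rule integral_mono)
    have "(\<lambda>x. F (torus_embedding x)) \<in> borel_measurable torus_measure"
      by (intro continuous_imp_measurable_torus continuous_on_compose2[OF F(1) continuous_on_torus_embedding]) auto
    then show "integrable torus_measure (\<lambda>x. \<bar>F (torus_embedding x) - indicator A x\<bar>)"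
      using A F(2) by (intro integrable_torus_bounded[where B=1]) (auto split: split_indicator)
  qed (use bound D_tm in auto)
  then show thesis
    using that F(1,2) D_small D_tm by auto
qed

lemma trig_poly_approx_indicator_torus:
  fixes A :: "(real^'d) set"
  assumes A: "A \<in> sets torus_measure" and \<epsilon>: "\<epsilon> > 0"
  obtains \<phi> u :: "real^'d \<Rightarrow> real"
  where "\<phi> \<in> borel_measurable torus_measure" "\<And>x. 0 \<le> \<phi> x \<and> \<phi> x \<le> 1"
    "(LINT x|torus_measure. \<bar>\<phi> x - indicator A x\<bar>) \<le> \<epsilon>"
    "trig_poly_on UNIV (\<lambda>x. complex_of_real (u x))" "\<And>x. x \<in> torus \<Longrightarrow> \<bar>\<phi> x - u x\<bar> < \<epsilon>"
proof -
  obtain \<Phi> where \<Phi>: "continuous_on UNIV \<Phi>" "\<And>z. 0 \<le> \<Phi> z \<and> \<Phi> z \<le> 1"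
    "(LINT x|torus_measure. \<bar>\<Phi> (torus_embedding x) - indicator A x\<bar>) \<le> \<epsilon>"
    using continuous_approx_indicator_torus[OF A \<epsilon>] by blast
  obtain p where p: "polynomial_function p"
    "\<And>x. x \<in> torus \<Longrightarrow> \<bar>\<Phi> (torus_embedding x) - p (torus_embedding x)\<bar> < \<epsilon>"
    using Stone_Weierstrass_polynomial_function[of "torus_embedding ` torus" \<Phi> \<epsilon>] \<Phi>(1) \<epsilon>
    by (auto simp: torus_def compact_continuous_image continuous_on_torus_embedding
        intro: continuous_on_subset)
  show thesis
  proof (rule that[of "\<lambda>x. \<Phi> (torus_embedding x)" "\<lambda>x. p (torus_embedding x)"])
    show "(\<lambda>x. \<Phi> (torus_embedding x)) \<in> borel_measurable torus_measure"
      by (intro continuous_imp_measurable_torus continuous_on_compose2[OF \<Phi>(1)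
          continuous_on_torus_embedding]) auto
    show "trig_poly_on UNIV (\<lambda>x. complex_of_real (p (torus_embedding x)))"
      using p(1) by (intro trig_poly_on_polynomial_torus_embedding) (simp add: real_polynomial_function_eq)
  qed (use \<Phi> p in auto)
qed

section \<open>Small values on a set force a small zeroth coefficient\<close>

lemma exp_mult_le_chord:
  fixes s t :: real
  assumes "0 \<le> t" "t \<le> 1"
  shows "exp (s * t) \<le> 1 + (exp s - 1) * t"
proof -
  have "exp ((1 - t) *\<^sub>R 0 + t *\<^sub>R s) \<le> (1 - t) * exp 0 + t * exp s"
    by (rule convex_onD[OF exp_convex]) (use assms in auto)
  then show ?thesis
    by (simp add: algebra_simps)
qed

(* The pointwise estimate behind the sublevel bound: n stands for |F x|, b for the value of the
   indicator of A at x, phi for a continuous approximation of b and u for a trigonometric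
   approximation of phi. *)
lemma mult_exp_le_sublevel_bound:
  fixes n \<phi> u s \<epsilon> R \<delta> b :: real
  assumes n: "0 \<le> n" "n \<le> R" and \<phi>: "0 \<le> \<phi>" "\<phi> \<le> 1" and u: "u \<le> \<phi> + \<epsilon>"
    and s: "0 \<le> s" "exp s = R / \<delta>" and \<delta>: "0 < \<delta>"
    and b: "b = 0 \<or> b = 1" "b = 1 \<Longrightarrow> n \<le> \<delta>"
  shows "n * exp (s * u) \<le> exp (s * \<epsilon>) * (R + R * (exp s - 1) * \<bar>\<phi> - b\<bar>)"
proof -
  have chord_nonneg: "0 \<le> (exp s - 1) * \<phi>"
    using \<phi> s(1) by simp
  have "s * u \<le> s * \<epsilon> + s * \<phi>"
    using u s by (simp add: mult_left_mono flip: distrib_left)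
  then have "exp (s * u) \<le> exp (s * \<epsilon>) * exp (s * \<phi>)"
    by (simp flip: exp_add)
  also have "\<dots> \<le> exp (s * \<epsilon>) * (1 + (exp s - 1) * \<phi>)"
    using \<phi> by (simp add: exp_mult_le_chord)
  finally have "n * exp (s * u) \<le> exp (s * \<epsilon>) * (n * (1 + (exp s - 1) * \<phi>))"
    using n by (simp add: mult_left_mono mult.left_commute)
  also have "n * (1 + (exp s - 1) * \<phi>) \<le> R + R * (exp s - 1) * \<bar>\<phi> - b\<bar>"
    using b(1)
  proof
    assume "b = 0"
    have "n * (1 + (exp s - 1) * \<phi>) \<le> R * (1 + (exp s - 1) * \<phi>)"
      using n chord_nonneg by (intro mult_right_mono) auto
    then show ?thesis
      using \<phi> by (simp add: \<open>b = 0\<close> algebra_simps)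
  next
    assume "b = 1"
    have "(exp s - 1) * \<phi> \<le> exp s - 1"
      using \<phi> s(1) by (intro mult_left_le) auto
    then have "n * (1 + (exp s - 1) * \<phi>) \<le> \<delta> * exp s"
      using b(2)[OF \<open>b = 1\<close>] n chord_nonneg by (intro mult_mono) auto
    also have "\<dots> = R"
      using s \<delta> by simp
    finally have "n * (1 + (exp s - 1) * \<phi>) \<le> R" .
    moreover have "0 \<le> R * (exp s - 1) * \<bar>\<phi> - b\<bar>"
      using n s(1) by simp
    ultimately show ?thesis
      by linarith
  qed
  finally show ?thesis
    by (simp add: mult_left_mono)
qed

lemma measure_le_integral_approx_indicator:
  assumes A: "A \<in> sets torus_measure"
    and \<phi>: "\<phi> \<in> borel_measurable torus_measure" "\<And>x. 0 \<le> \<phi> x \<and> \<phi> x \<le> 1"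
    and \<phi>_close: "(LINT x|torus_measure. \<bar>\<phi> x - indicator A x\<bar>) \<le> \<epsilon>"
    and u: "integrable torus_measure u" "\<And>x. x \<in> torus \<Longrightarrow> \<bar>\<phi> x - u x\<bar> < \<epsilon>"
  shows "measure torus_measure A - 2 * \<epsilon> \<le> (LINT x|torus_measure. u x)"
proof -
  have int_\<phi>: "integrable torus_measure \<phi>"
    using \<phi> by (intro integrable_torus_bounded[where B=1]) auto
  have "measure torus_measure A - (LINT x|torus_measure. \<phi> x) = (LINT x|torus_measure. indicator A x - \<phi> x)"
    using A int_\<phi> by simp
  also have "\<dots> \<le> (LINT x|torus_measure. \<bar>\<phi> x - indicator A x\<bar>)"
    using A \<phi> int_\<phi> by (intro integral_mono integrable_torus_bounded[where B=1]) (auto split: split_indicator)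
  finally have "measure torus_measure A - \<epsilon> \<le> (LINT x|torus_measure. \<phi> x)"
    using \<phi>_close by linarith
  also have "(LINT x|torus_measure. \<phi> x) = (LINT x|torus_measure. \<phi> x - \<epsilon>) + \<epsilon>"
    using int_\<phi> by simp
  also have "(LINT x|torus_measure. \<phi> x - \<epsilon>) \<le> (LINT x|torus_measure. u x)"
    using int_\<phi> u by (intro integral_mono) (auto simp: abs_less_iff dest!: u(2))
  finally show ?thesis
    by simp
qed

lemma integral_norm_mult_exp_le_sublevel:
  assumes F: "F \<in> borel_measurable torus_measure"
    and bound: "AE x in torus_measure. norm (F x) \<le> R"
    and A: "A \<in> sets torus_measure" and small: "\<And>x. x \<in> A \<Longrightarrow> norm (F x) \<le> \<delta>"
    and \<delta>: "0 < \<delta>" "\<delta> < R"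
    and \<phi>: "\<phi> \<in> borel_measurable torus_measure" "\<And>x. 0 \<le> \<phi> x \<and> \<phi> x \<le> 1"
    and \<phi>_close: "(LINT x|torus_measure. \<bar>\<phi> x - indicator A x\<bar>) \<le> \<epsilon>"
    and u: "u \<in> borel_measurable torus_measure" "\<And>x. x \<in> torus \<Longrightarrow> \<bar>\<phi> x - u x\<bar> < \<epsilon>"
  defines "s \<equiv> ln (R / \<delta>)"
  shows "(LINT x|torus_measure. norm (F x) * exp (s * u x)) \<le> exp (s * \<epsilon>) * (R + R * (R / \<delta> - 1) * \<epsilon>)"
proof -
  have s: "0 < s" "exp s = R / \<delta>"
    using \<delta> by (simp_all add: s_def)
  have int_dist: "integrable torus_measure (\<lambda>x. \<bar>\<phi> x - indicator A x\<bar>)"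
    using A \<phi> by (intro integrable_torus_bounded[where B=1]) (auto split: split_indicator)
  have pointwise: "norm (F x) * exp (s * u x) \<le> exp (s * \<epsilon>) * (R + R * (exp s - 1) * \<bar>\<phi> x - indicator A x\<bar>)"
    if "norm (F x) \<le> R" "x \<in> torus" for x
    using that \<phi>(2)[of x] u(2)[of x] s \<delta> small[of x]
    by (intro mult_exp_le_sublevel_bound[where \<delta>=\<delta>])
      (auto simp: abs_less_iff split: split_indicator split_indicator_asm)
  have "(LINT x|torus_measure. norm (F x) * exp (s * u x))
      \<le> (LINT x|torus_measure. exp (s * \<epsilon>) * (R + R * (exp s - 1) * \<bar>\<phi> x - indicator A x\<bar>))"
  proof (rule integral_mono_AE)
    show "integrable torus_measure (\<lambda>x. exp (s * \<epsilon>) * (R + R * (exp s - 1) * \<bar>\<phi> x - indicator A x\<bar>))"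
      using int_dist by simp
    show "AE x in torus_measure. norm (F x) * exp (s * u x)
        \<le> exp (s * \<epsilon>) * (R + R * (exp s - 1) * \<bar>\<phi> x - indicator A x\<bar>)"
      using bound AE_space by eventually_elim (auto intro: pointwise)
    then show "integrable torus_measure (\<lambda>x. norm (F x) * exp (s * u x))"
      using int_dist F u(1) by (intro Bochner_Integration.integrable_bound[OF
          \<open>integrable torus_measure (\<lambda>x. exp (s * \<epsilon>) * _)\<close>]) (measurable, auto elim: AE_mp)
  qed
  also have "\<dots> = exp (s * \<epsilon>) * (R + R * (exp s - 1) * (LINT x|torus_measure. \<bar>\<phi> x - indicator A x\<bar>))"
    using int_dist by simp
  also have "\<dots> \<le> exp (s * \<epsilon>) * (R + R * (exp s - 1) * \<epsilon>)"
    using \<phi>_close \<delta> s by (simp add: mult_left_mono)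
  finally show ?thesis
    by (simp add: s(2))
qed

lemma norm_fourier_coeff_0_sublevel_approx:
  assumes S: "half_space S" and F: "F \<in> borel_measurable torus_measure"
    and bound: "AE x in torus_measure. norm (F x) \<le> R"
    and vanish: "\<forall>\<xi>\<in>S. fourier_coeff F \<xi> = 0"
    and A: "A \<in> sets torus_measure" and small: "\<And>x. x \<in> A \<Longrightarrow> norm (F x) \<le> \<delta>"
    and \<delta>: "0 < \<delta>" "\<delta> < R" and \<epsilon>: "\<epsilon> > 0"
  shows "norm (fourier_coeff F 0) * exp (ln (R / \<delta>) * measure torus_measure A)
    \<le> exp (3 * ln (R / \<delta>) * \<epsilon>) * (R + R * (R / \<delta> - 1) * \<epsilon>)"
proof -
  define s where "s = ln (R / \<delta>)"
  have "0 < s"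
    using \<delta> by (simp add: s_def)
  obtain \<phi> u where \<phi>: "\<phi> \<in> borel_measurable torus_measure" "\<And>x. 0 \<le> \<phi> x \<and> \<phi> x \<le> 1"
    and \<phi>_close: "(LINT x|torus_measure. \<bar>\<phi> x - indicator A x\<bar>) \<le> \<epsilon>"
    and u: "trig_poly_on UNIV (\<lambda>x. complex_of_real (u x))" "\<And>x. x \<in> torus \<Longrightarrow> \<bar>\<phi> x - u x\<bar> < \<epsilon>"
    using trig_poly_approx_indicator_torus[OF A \<epsilon>] by blast
  have int_u: "integrable torus_measure u"
    using integrable_Re[OF trig_poly_on_integrable[OF u(1)]] by simp
  have "norm (fourier_coeff F 0) * exp (s * (measure torus_measure A - 2 * \<epsilon>))
      \<le> norm (fourier_coeff F 0) * exp (LINT x|torus_measure. s * u x)"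
    using measure_le_integral_approx_indicator[OF A \<phi> \<phi>_close int_u u(2)] \<open>0 < s\<close>
    by (simp add: mult_left_mono)
  also have "\<dots> \<le> (LINT x|torus_measure. norm (F x) * exp (s * u x))"
    using norm_fourier_coeff_0_mult_exp_le[OF S _ vanish trig_poly_on_scale[OF u(1), of "of_real s"]]
      torus.integrable_const_bound[OF bound F]
    by simp
  also have "\<dots> \<le> exp (s * \<epsilon>) * (R + R * (R / \<delta> - 1) * \<epsilon>)"
    unfolding s_def using int_u
    by (intro integral_norm_mult_exp_le_sublevel[OF F bound A small \<delta> \<phi> \<phi>_close _ u(2)]) auto
  finally have "norm (fourier_coeff F 0) * exp (s * measure torus_measure A) * exp (- (2 * s * \<epsilon>))
      \<le> exp (s * \<epsilon>) * (R + R * (R / \<delta> - 1) * \<epsilon>)"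
    by (simp add: algebra_simps flip: exp_add)
  then show ?thesis
    by (simp add: s_def[symmetric] exp_minus field_simps flip: exp_add)
qed

lemma norm_fourier_coeff_0_sublevel:
  assumes S: "half_space S" and F: "F \<in> borel_measurable torus_measure"
    and bound: "AE x in torus_measure. norm (F x) \<le> R"
    and vanish: "\<forall>\<xi>\<in>S. fourier_coeff F \<xi> = 0"
    and A: "A \<in> sets torus_measure" and small: "\<And>x. x \<in> A \<Longrightarrow> norm (F x) \<le> \<delta>"
    and \<delta>: "0 < \<delta>" "\<delta> < R"
  shows "norm (fourier_coeff F 0) * exp (ln (R / \<delta>) * measure torus_measure A) \<le> R"
proof (rule tendsto_le[OF trivial_limit_at_right_real])
  let ?s = "ln (R / \<delta>)"
  show "((\<lambda>\<epsilon>. exp (3 * ?s * \<epsilon>) * (R + R * (R / \<delta> - 1) * \<epsilon>)) \<longlongrightarrow> R) (at_right 0)"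
    by (auto intro!: tendsto_eq_intros)
  show "((\<lambda>\<epsilon>. norm (fourier_coeff F 0) * exp (?s * measure torus_measure A))
      \<longlongrightarrow> norm (fourier_coeff F 0) * exp (?s * measure torus_measure A)) (at_right 0)"
    by simp
  show "\<forall>\<^sub>F \<epsilon> in at_right 0. norm (fourier_coeff F 0) * exp (?s * measure torus_measure A)
      \<le> exp (3 * ?s * \<epsilon>) * (R + R * (R / \<delta> - 1) * \<epsilon>)"
    using norm_fourier_coeff_0_sublevel_approx[OF assms] by (intro eventually_at_rightI[of 0 1]) auto
qed

section \<open>The coefficients on the unimodular set\<close>

lemma norm_sum_powers_le:
  fixes z :: "'a::real_normed_field"
  assumes z: "norm z = 1"
  shows "norm (\<Sum>m=M..M+p. z ^ m)
    \<le> (if norm (1 - z) < 2 / sqrt (real (p + 1)) then real (p + 1) else sqrt (real (p + 1)))"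
proof (cases "norm (1 - z) < 2 / sqrt (real (p + 1))")
  case True
  have "norm (\<Sum>m=M..M+p. z ^ m) \<le> (\<Sum>m=M..M+p. norm (z ^ m))"
    by (rule norm_sum)
  then show ?thesis
    unfolding if_P[OF True] using z by (simp add: norm_power)
next
  case False
  moreover have "0 < 2 / sqrt (real (p + 1))"
    by simp
  ultimately have pos: "norm (1 - z) > 0"
    by linarith
  have "norm (1 - z) * norm (\<Sum>m=M..M+p. z ^ m) = norm (z ^ M - z ^ Suc (M + p))"
    by (simp add: sum_gp_multiplied flip: norm_mult)
  also have "\<dots> \<le> 2"
    using norm_triangle_ineq4[of "z ^ M" "z ^ Suc (M + p)"] z by (simp add: norm_power norm_mult)
  finally have "norm (\<Sum>m=M..M+p. z ^ m) \<le> 2 / norm (1 - z)"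
    using pos by (simp add: field_simps)
  also have "\<dots> \<le> 2 / (2 / sqrt (real (p + 1)))"
    using False pos by (intro divide_left_mono) auto
  finally show ?thesis
    unfolding if_not_P[OF False] by simp
qed

lemma ln_le_sqrt:
  fixes x :: real
  assumes "x > 0"
  shows "ln x \<le> sqrt x"
proof -
  have "ln x = 2 * (ln (sqrt x / 2) + ln 2)"
    using assms by (simp add: ln_sqrt ln_div)
  also have "\<dots> \<le> 2 * ((sqrt x / 2 - 1) + ln 2)"
    using ln_le_minus_one[of "sqrt x / 2"] assms by simp
  also have "\<dots> \<le> sqrt x"
    using ln_2_less_1 by simp
  finally show ?thesis .
qed

lemma sqrt_add_le_ln_bound:
  fixes N L :: real
  assumes N: "2 \<le> N" and L: "1 / 2 \<le> L"
  shows "sqrt N + N * (2 * L / ln N) \<le> 4 * L * N / ln N"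
proof -
  have "sqrt N \<le> 2 * L * sqrt N"
    using mult_right_mono[of 1 "2 * L" "sqrt N"] L N by simp
  moreover have "ln N \<le> sqrt N"
    using N by (simp add: ln_le_sqrt)
  ultimately have "ln N \<le> 2 * L * sqrt N"
    by linarith
  then have "sqrt N * ln N \<le> sqrt N * (2 * L * sqrt N)"
    by (rule mult_left_mono) (use N in auto)
  also have "\<dots> = 2 * L * (sqrt N * sqrt N)"
    by (simp only: mult_ac)
  also have "\<dots> = 2 * L * N"
    using N by simp
  finally show ?thesis
    using N by (simp add: field_simps)
qed

lemma fourier_coeff_diff_char:
  assumes "integrable torus_measure f"
  shows "fourier_coeff (\<lambda>x. f x - \<mu> * torus_char \<nu> x) \<xi> = fourier_coeff f \<xi> - (if \<xi> = \<nu> then \<mu> else 0)"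
proof -
  have "(\<lambda>x. (f x - \<mu> * torus_char \<nu> x) * torus_char (- \<xi>) x)
      = (\<lambda>x. f x * torus_char (- \<xi>) x - \<mu> * torus_char (\<nu> - \<xi>) x)"
    by (simp add: torus_char_add[symmetric] algebra_simps)
  then show ?thesis
    using assms by (simp add: fourier_coeff_eq_integral_char integrable_torus_mult_bounded[where B=1])
qed

context
  fixes f :: "real^'d \<Rightarrow> complex" and \<nu> :: "int^'d" and S :: "(int^'d) set"
  assumes meas: "f \<in> borel_measurable torus_measure"
    and bdd: "AE x in torus_measure. cmod (f x) \<le> 1"
    and hs: "half_space S"
    and vanish: "\<forall>\<xi>\<in>S. fourier_coeff f \<xi> = 0"
    and nu: "\<nu> \<in> uminus ` S"
    and nz: "fourier_coeff f 0 \<noteq> 0"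
begin

lemma integrable_f: "integrable torus_measure f"
  by (rule torus.integrable_const_bound[OF bdd meas])

lemma norm_fourier_coeff_0_le_1: "cmod (fourier_coeff f 0) \<le> 1"
proof -
  have "cmod (fourier_coeff f 0) \<le> (LINT x|torus_measure. cmod (f x))"
    by (simp add: fourier_coeff_eq_integral_char integral_norm_bound)
  also have "\<dots> \<le> (LINT x|(torus_measure :: (real^'d) measure). 1)"
    using bdd integrable_f by (intro integral_mono_AE) auto
  finally show ?thesis
    by simp
qed

lemma near_char_sets: "{y \<in> torus. cmod (f y - \<mu> * torus_char \<nu> y) < r} \<in> sets torus_measure"
proof -
  have "{y \<in> space torus_measure. cmod (f y - \<mu> * torus_char \<nu> y) < r} \<in> sets torus_measure"
    using meas by measurable
  then show ?thesis
    by simp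
qed

lemma measure_near_char_le:
  assumes \<mu>: "cmod \<mu> \<le> 1" and N: "1 < N"
  shows "measure torus_measure {y \<in> torus. cmod (f y - \<mu> * torus_char \<nu> y) < 2 / sqrt N}
    \<le> 2 * ln (2 / cmod (fourier_coeff f 0)) / ln N"
proof -
  define g where "g y = f y - \<mu> * torus_char \<nu> y" for y
  define A where "A = {y \<in> torus. cmod (g y) < 2 / sqrt N}"
  define c where "c = cmod (fourier_coeff f 0)"
  \<comment> \<open>As \<open>\<nu> \<in> - S\<close>, subtracting \<open>\<mu> * torus_char \<nu>\<close> changes no Fourier coefficient on \<open>S \<union> {0}\<close>.\<close>
  have "\<nu> \<noteq> 0" "\<nu> \<notin> S"
    using nu hs unfolding half_space_def by (force, metis add.right_inverse image_iff)
  then have g_coeff: "fourier_coeff g \<xi> = (if \<xi> = \<nu> then fourier_coeff f \<xi> - \<mu> else fourier_coeff f \<xi>)" for \<xi>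
    unfolding g_def by (simp add: fourier_coeff_diff_char[OF integrable_f])
  have g_meas: "g \<in> borel_measurable torus_measure"
    unfolding g_def using meas by measurable
  have "AE x in torus_measure. cmod (g x) \<le> 2"
    using bdd
  proof eventually_elim
    case (elim x)
    then show ?case
      using norm_triangle_ineq4[of "f x" "\<mu> * torus_char \<nu> x"] \<mu> by (simp add: g_def norm_mult)
  qed
  moreover have "A \<in> sets torus_measure"
    unfolding A_def g_def by (rule near_char_sets)
  moreover have "2 / sqrt N < 2"
    using N by (simp add: divide_less_eq)
  ultimately have "cmod (fourier_coeff g 0) * exp (ln (2 / (2 / sqrt N)) * measure torus_measure A) \<le> 2"
    using g_coeff \<open>\<nu> \<notin> S\<close> vanish N
    by (intro norm_fourier_coeff_0_sublevel[OF hs g_meas]) (auto simp: A_def)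
  then have "c * exp (ln N / 2 * measure torus_measure A) \<le> 2"
    using g_coeff[of 0] \<open>\<nu> \<noteq> 0\<close> N by (simp add: c_def ln_sqrt)
  then have "ln c + ln N / 2 * measure torus_measure A \<le> ln 2"
    using N nz ln_le_cancel_iff[of "c * exp (ln N / 2 * measure torus_measure A)" 2]
    by (simp add: c_def ln_mult)
  then show ?thesis
    using N nz by (simp add: A_def g_def c_def ln_div field_simps)
qed

definition twist :: "real^'d \<Rightarrow> complex" where
  "twist x = f x * torus_char (- \<nu>) x"

lemma measurable_twist [measurable]: "twist \<in> borel_measurable torus_measure"
  unfolding twist_def using meas by measurable

lemma norm_twist: "x \<in> unimod_set f \<Longrightarrow> cmod (twist x) = 1"
  by (simp add: twist_def unimod_set_def norm_mult)

lemma unimod_set_sets: "unimod_set f \<in> sets torus_measure"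
proof -
  have "{x \<in> space torus_measure. cmod (f x) = 1} \<in> sets torus_measure"
    using meas by measurable
  then show ?thesis
    by (simp add: unimod_set_def)
qed

lemma bcoef_eq_integral_twist:
  "bcoef f \<nu> (int m) (int m - k)
    = (LINT x|torus_measure. indicator (unimod_set f) x * (twist x ^ m * torus_char (k *s \<nu>) x))"
proof -
  have "- 2 * pi * \<i> * of_int (int m - k) * complex_of_real (lat_dot \<nu> x)
      = of_nat m * (2 * pi * \<i> * complex_of_real (lat_dot (- \<nu>) x))
          + 2 * pi * \<i> * complex_of_real (lat_dot (k *s \<nu>) x)" for x
    by (simp add: lat_dot_uminus lat_dot_scale algebra_simps)
  then have "exp (- 2 * pi * \<i> * of_int (int m - k) * complex_of_real (lat_dot \<nu> x))
      = torus_char (- \<nu>) x ^ m * torus_char (k *s \<nu>) x" for x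
    unfolding torus_char_def exp_of_nat_mult[symmetric] exp_add[symmetric] by simp
  then have "f x powi int m * exp (- 2 * pi * \<i> * of_int (int m - k) * complex_of_real (lat_dot \<nu> x))
      = twist x ^ m * torus_char (k *s \<nu>) x" for x
    by (simp add: twist_def power_mult_distrib power_int_of_nat mult.assoc)
  then show ?thesis
    by (simp add: bcoef_def)
qed

lemma norm_one_minus_cnj_twist_mult:
  assumes "x \<in> unimod_set f" "y \<in> unimod_set f"
  shows "cmod (1 - cnj (twist x) * twist y) = cmod (f y - twist x * torus_char \<nu> y)"
proof -
  have "twist x * cnj (twist x) = 1"
    using norm_twist[OF assms(1)] by (simp add: complex_norm_square[symmetric])
  then have "twist x * (1 - cnj (twist x) * twist y) = twist x - twist y"
    by (simp add: right_diff_distrib mult.assoc[symmetric])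
  also have "\<dots> = - torus_char (- \<nu>) y * (f y - twist x * torus_char \<nu> y)"
  proof -
    have "torus_char (- \<nu>) y * (twist x * torus_char \<nu> y) = twist x"
      by (simp add: mult.left_commute[of _ "twist x"] flip: torus_char_add)
    then show ?thesis
      by (simp add: twist_def right_diff_distrib mult.commute)
  qed
  finally have "cmod (twist x) * cmod (1 - cnj (twist x) * twist y) = cmod (f y - twist x * torus_char \<nu> y)"
    by (metis norm_minus_cancel norm_mult norm_torus_char mult_1)
  then show ?thesis
    using norm_twist[OF assms(1)] by simp
qed

lemma sum_mult_bcoef_eq_integral:
  "(\<Sum>m\<in>I. c m * bcoef f \<nu> (int m) (int m - k))
    = (LINT x|torus_measure. indicator (unimod_set f) x * torus_char (k *s \<nu>) x * (\<Sum>m\<in>I. c m * twist x ^ m))"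
proof -
  have "(\<Sum>m\<in>I. c m * bcoef f \<nu> (int m) (int m - k))
      = (\<Sum>m\<in>I. LINT x|torus_measure. c m * (indicator (unimod_set f) x * (twist x ^ m * torus_char (k *s \<nu>) x)))"
    by (simp only: bcoef_eq_integral_twist integral_mult_right_zero)
  also have "\<dots> = (\<integral>x. (\<Sum>m\<in>I.
      c m * (indicator (unimod_set f) x * (twist x ^ m * torus_char (k *s \<nu>) x))) \<partial>torus_measure)"
  proof (rule Bochner_Integration.integral_sum[symmetric])
    show "integrable torus_measure
        (\<lambda>x. c m * (indicator (unimod_set f) x * (twist x ^ m * torus_char (k *s \<nu>) x)))" for m
      using unimod_set_sets norm_twist
      by (intro integrable_torus_bounded[where B="cmod (c m)"]) (auto simp: norm_mult norm_power split: split_indicator)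
  qed
  also have "\<dots> = (LINT x|torus_measure. indicator (unimod_set f) x * torus_char (k *s \<nu>) x * (\<Sum>m\<in>I. c m * twist x ^ m))"
    by (simp only: sum_distrib_left mult_ac)
  finally show ?thesis .
qed

lemma norm_sum_cnj_bcoef_le:
  assumes x: "x \<in> unimod_set f" and p: "p \<ge> 1"
  defines "N \<equiv> real (p + 1)"
  shows "cmod (\<Sum>m=M..M+p. cnj (bcoef f \<nu> (int m) (int m - k)) * twist x ^ m)
    \<le> sqrt N + N * (2 * ln (2 / cmod (fourier_coeff f 0)) / ln N)"
proof -
  define A where "A = {y \<in> torus. cmod (f y - twist x * torus_char \<nu> y) < 2 / sqrt N}"
  define G where "G y = indicator (unimod_set f) y * torus_char (k *s \<nu>) y
      * (\<Sum>m=M..M+p. cnj (twist x) ^ m * twist y ^ m)" for y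
  have N: "1 < N"
    using p by (simp add: N_def)
  have A_sets: "A \<in> sets torus_measure"
    unfolding A_def by (rule near_char_sets)
  \<comment> \<open>The geometric sum is large only where \<open>twist y\<close> is close to \<open>twist x\<close>, that is on \<open>A\<close>.\<close>
  have G_bound: "cmod (G y) \<le> sqrt N + N * indicator A y" for y
  proof (cases "y \<in> unimod_set f")
    case True
    define z where "z = cnj (twist x) * twist y"
    have "cmod z = 1"
      using True x by (simp add: z_def norm_mult norm_twist)
    have "cmod (G y) = cmod (\<Sum>m=M..M+p. z ^ m)"
      using True by (simp add: G_def z_def norm_mult power_mult_distrib)
    also have "\<dots> \<le> (if cmod (1 - z) < 2 / sqrt N then N else sqrt N)"
      unfolding N_def by (rule norm_sum_powers_le[OF \<open>cmod z = 1\<close>])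
    also have "\<dots> \<le> sqrt N + N * indicator A y"
      using True x N norm_one_minus_cnj_twist_mult[OF x True] by (auto simp: A_def z_def unimod_set_def)
    finally show ?thesis .
  qed (use N in \<open>simp add: G_def\<close>)
  have "cmod (\<Sum>m=M..M+p. cnj (bcoef f \<nu> (int m) (int m - k)) * twist x ^ m)
      = cmod (\<Sum>m=M..M+p. cnj (twist x) ^ m * bcoef f \<nu> (int m) (int m - k))"
    by (subst complex_mod_cnj[symmetric]) (simp add: mult.commute)
  also have "\<dots> = cmod (LINT y|torus_measure. G y)"
    by (simp add: sum_mult_bcoef_eq_integral G_def)
  also have "\<dots> \<le> (LINT y|torus_measure. sqrt N + N * indicator A y)"
  proof (rule Bochner_Integration.integral_norm_bound_integral)
    show "integrable torus_measure G"
    proof (rule integrable_torus_bounded)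
      show "G \<in> borel_measurable torus_measure"
        unfolding G_def using unimod_set_sets by measurable
      show "cmod (G y) \<le> sqrt N + N" for y
        using G_bound[of y] N by (cases "y \<in> A") auto
    qed
    show "integrable torus_measure (\<lambda>y. sqrt N + N * indicator A y)"
      using A_sets N by (intro integrable_torus_bounded[where B="sqrt N + N"]) (auto split: split_indicator)
  qed (use G_bound in auto)
  also have "\<dots> = sqrt N + N * measure torus_measure A"
    using A_sets by (simp add: Bochner_Integration.integral_add)
  also have "\<dots> \<le> sqrt N + N * (2 * ln (2 / cmod (fourier_coeff f 0)) / ln N)"
    using mult_left_mono[OF measure_near_char_le[OF _ N]] norm_twist[OF x] N by (simp add: A_def)
  finally show ?thesis .
qed

lemma sum_norm_bcoef_sq_le:
  assumes p: "p \<ge> 1"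
  defines "N \<equiv> real (p + 1)"
  shows "(\<Sum>m=M..M+p. (cmod (bcoef f \<nu> (int m) (int m - k)))\<^sup>2)
    \<le> sqrt N + N * (2 * ln (2 / cmod (fourier_coeff f 0)) / ln N)"
proof -
  define b where "b m = bcoef f \<nu> (int m) (int m - k)" for m
  define B where "B = sqrt N + N * (2 * ln (2 / cmod (fourier_coeff f 0)) / ln N)"
  define H where "H x = indicator (unimod_set f) x * torus_char (k *s \<nu>) x
      * (\<Sum>m=M..M+p. cnj (b m) * twist x ^ m)" for x
  have "0 \<le> ln (2 / cmod (fourier_coeff f 0))"
    using nz norm_fourier_coeff_0_le_1 by simp
  then have "0 \<le> B"
    using p by (simp add: B_def N_def)
  have H_bound: "cmod (H x) \<le> B" for x
    using norm_sum_cnj_bcoef_le[OF _ p] \<open>0 \<le> B\<close>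
    by (cases "x \<in> unimod_set f") (simp_all add: H_def B_def b_def N_def norm_mult)
  have "0 \<le> (\<Sum>m=M..M+p. (cmod (b m))\<^sup>2)"
    by (simp add: sum_nonneg)
  moreover have "complex_of_real (\<Sum>m=M..M+p. (cmod (b m))\<^sup>2) = (\<Sum>m=M..M+p. cnj (b m) * b m)"
    unfolding of_real_sum complex_norm_square by (simp add: mult.commute)
  ultimately have "(\<Sum>m=M..M+p. (cmod (b m))\<^sup>2) = cmod (\<Sum>m=M..M+p. cnj (b m) * b m)"
    by (metis abs_of_nonneg norm_of_real)
  also have "\<dots> = cmod (LINT x|torus_measure. H x)"
    by (simp only: b_def sum_mult_bcoef_eq_integral H_def)
  also have "\<dots> \<le> (LINT x|(torus_measure :: (real^'d) measure). B)"
  proof (rule Bochner_Integration.integral_norm_bound_integral)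
    show "integrable torus_measure H"
      unfolding H_def using unimod_set_sets H_bound
      by (intro integrable_torus_bounded[where B=B]) (auto simp: H_def)
  qed (use H_bound in auto)
  finally show ?thesis
    by (simp add: b_def B_def)
qed

lemma average_norm_bcoef_sq_le:
  assumes p: "p \<ge> 1"
  shows "(1 / real (p + 1)) * (\<Sum>m=M..M+p. (cmod (bcoef f \<nu> (int m) (int m - k)))\<^sup>2)
    \<le> ln (16 / (cmod (fourier_coeff f 0)) ^ 4) / ln (real (p + 1))"
proof -
  define N where "N = real (p + 1)"
  define L where "L = ln (2 / cmod (fourier_coeff f 0))"
  have N: "2 \<le> N"
    using p by (simp add: N_def)
  have "ln 2 \<le> L"
    using nz norm_fourier_coeff_0_le_1 by (simp add: L_def field_simps)
  then have L: "1 / 2 \<le> L"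
    using ln2_ge_two_thirds by linarith
  have "sqrt N + N * (2 * L / ln N) \<le> 4 * L * N / ln N"
    using N L by (rule sqrt_add_le_ln_bound)
  moreover have "(\<Sum>m=M..M+p. (cmod (bcoef f \<nu> (int m) (int m - k)))\<^sup>2) \<le> sqrt N + N * (2 * L / ln N)"
    unfolding N_def L_def by (rule sum_norm_bcoef_sq_le[OF p])
  ultimately have "(1 / N) * (\<Sum>m=M..M+p. (cmod (bcoef f \<nu> (int m) (int m - k)))\<^sup>2)
      \<le> (1 / N) * (4 * L * N / ln N)"
    using N by (intro mult_left_mono) auto
  also have "\<dots> = ln (16 / (cmod (fourier_coeff f 0)) ^ 4) / ln N"
  proof -
    have "16 / (cmod (fourier_coeff f 0)) ^ 4 = (2 / cmod (fourier_coeff f 0)) ^ 4"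
      by (simp add: power_divide)
    then show ?thesis
      using nz N by (simp add: L_def ln_realpow)
  qed
  finally show ?thesis
    by (simp only: N_def)
qed

end

theorem theorem1:
  fixes f :: "real^'d \<Rightarrow> complex" and \<nu> :: "int^'d" and S :: "(int^'d) set"
  assumes meas: "f \<in> borel_measurable torus_measure"
    and bdd: "AE x in torus_measure. cmod (f x) \<le> 1"
    and hs: "half_space S"
    and vanish: "\<forall>\<xi>\<in>S. fourier_coeff f \<xi> = 0"
    and nu: "\<nu> \<in> uminus ` S"
    and nz: "fourier_coeff f 0 \<noteq> 0"
  shows "\<forall>M p :: nat. \<forall>k :: int. M \<ge> 1 \<longrightarrow> p \<ge> 1 \<longrightarrow>
     (1 / real (p + 1)) * (\<Sum>m=M..M+p. (cmod (bcoef f \<nu> (int m) (int m - k)))\<^sup>2)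
       \<le> ln (16 / (cmod (fourier_coeff f 0)) ^ 4) / ln (real (p + 1))"
  using average_norm_bcoef_sq_le[OF meas bdd hs vanish nu nz] by blast

end
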